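(* For every integer $n\ge 1$, let \[ R_n:=\frac{\pi}{4}-\sum_{m=0}^{n-1}\frac{(-1)^m}{2m+1}=\sum_{m=n}^{\infty}\frac{(-1)^m}{2m+1}. \] Then \begin{align*} R_{n}=\frac{(-1)^{n}(2n-1)!}{16}\sum_{k=0}^{\infty}\frac{1}{16^{k}}\Bigg[&\frac{8}{(8k+1)_{2n}}-\frac{4}{(8k+3)_{2n}}-\frac{4}{(8k+4)_{2n}} \\ &-\frac{2}{(8k+5)_{2n}}+\frac{1}{(8k+7)_{2n}}+\frac{1}{(8k+8)_{2n}}\Bigg]. \end{align*}
   Context: For a real number $a$ and integer $m\ge 0$, $(a)_m$ denotes the rising factorial (Pochhammer symbol): $(a)_0:=1$ and $(a)_m:=a(a+1)\cdots(a+m-1)=\Gamma(a+m)/\Gamma(a)$. Thus $(8k+q)_{2n}$ is a product of $2n$ consecutive factors starting at $8k+q$. *)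

theory Defs
  imports Complex_Main
begin

definition R :: "nat \<Rightarrow> real" where
  "R n = pi / 4 - (\<Sum>m<n. (-1) ^ m / (2 * real m + 1))"

definition bbp_term :: "nat \<Rightarrow> nat \<Rightarrow> real" where
  "bbp_term n k = (1 / 16 ^ k) *
     (8 / pochhammer (8 * real k + 1) (2 * n)
    - 4 / pochhammer (8 * real k + 3) (2 * n)
    - 4 / pochhammer (8 * real k + 4) (2 * n)
    - 2 / pochhammer (8 * real k + 5) (2 * n)
    + 1 / pochhammer (8 * real k + 7) (2 * n)
    + 1 / pochhammer (8 * real k + 8) (2 * n))"

end

theory Submission
  imports Defs
begin

text \<open>
  Write Phi_m(b) = m! / (b)_(m+1), Euler's Beta value B(b, m + 1) (\<open>beta_poch\<close>). Then (2n - 1)!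
  times the k-th bracket of the series is a fixed combination G_(2n-1)(8k) of values of Phi_(2n-1)
  (\<open>bbp_bracket\<close>). The difference equation Phi_(m+1)(b) = Phi_m(b) - Phi_m(b + 1) yields
  G_m(a) + G_(m+2)(a) = 16 Phi_(m+1)(a + 1) - Phi_(m+1)(a + 9), which telescopes in k because
  8(k + 1) + 1 = 8k + 9. Hence the sum S_n of the series satisfies
  S_n - S_(n+1) = (-1)^n Phi_(2n)(1) = (-1)^n / (2n + 1) = R_n - R_(n+1),
  and as both S_n and R_n tend to 0, S_n = R_n.
\<close>

definition beta_poch :: "nat \<Rightarrow> real \<Rightarrow> real" where
  "beta_poch m b = fact m / pochhammer b (Suc m)"

lemma beta_poch_Suc:
  assumes "b > 0"
  shows "beta_poch (Suc m) b = beta_poch m b - beta_poch m (b + 1)"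
proof -
  define P Q where "P = pochhammer b (Suc m)" and "Q = pochhammer (b + 1) (Suc m)"
  have pos: "P > 0" "Q > 0"
    using assms by (simp_all add: P_def Q_def pochhammer_pos)
  have "b * Q = (b + of_nat (Suc m)) * P"
    unfolding P_def Q_def by (metis pochhammer_rec pochhammer_rec')
  then have PQ: "b * Q - b * P = of_nat (Suc m) * P"
    by (simp add: algebra_simps)
  have "beta_poch m b - beta_poch m (b + 1) = fact m * (b * Q - b * P) / (b * P * Q)"
    unfolding beta_poch_def P_def [symmetric] Q_def [symmetric]
    using assms pos by (simp add: field_simps)
  also have "\<dots> = fact (Suc m) / (b * Q)"
    using assms pos by (simp only: PQ fact_Suc) (simp add: field_simps)
  also have "b * Q = pochhammer b (Suc (Suc m))"
    unfolding Q_def by (rule pochhammer_rec [symmetric])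
  finally show ?thesis
    by (simp add: beta_poch_def)
qed

lemma pochhammer_mono:
  fixes a b :: "'a :: linordered_semidom"
  assumes "0 \<le> a" "a \<le> b"
  shows "pochhammer a n \<le> pochhammer b n"
  unfolding pochhammer_prod using assms by (intro prod_mono) auto

lemma beta_poch_nonneg: "b > 0 \<Longrightarrow> 0 \<le> beta_poch m b"
  by (simp add: beta_poch_def pochhammer_pos less_imp_le)

lemma beta_poch_le:
  assumes "b \<ge> 1"
  shows "beta_poch m b \<le> 1 / real (Suc m)"
proof -
  have "fact (Suc m) \<le> pochhammer b (Suc m)"
    unfolding pochhammer_fact using assms by (intro pochhammer_mono) auto
  then have "beta_poch m b \<le> fact m / fact (Suc m)"
    unfolding beta_poch_def using assms by (intro divide_left_mono) (auto simp: pochhammer_pos)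
  also have "\<dots> = 1 / real (Suc m)"
    by (simp del: of_nat_Suc)
  finally show ?thesis .
qed

lemma beta_poch_Suc_Suc:
  assumes "b > 0"
  shows "beta_poch (Suc (Suc m)) b = beta_poch m b - 2 * beta_poch m (b + 1) + beta_poch m (b + 2)"
  using assms by (simp add: beta_poch_Suc add.assoc)

definition bbp_bracket :: "nat \<Rightarrow> real \<Rightarrow> real" where
  "bbp_bracket m a = 8 * beta_poch m (a + 1) - 4 * beta_poch m (a + 3) - 4 * beta_poch m (a + 4)
     - 2 * beta_poch m (a + 5) + beta_poch m (a + 7) + beta_poch m (a + 8)"

text \<open>
  With E the shift b \<mapsto> b + 1, so that Phi_(m+1) = (1 - E) Phi_m, this is the polynomial identity
  (8 - 4E^2 - 4E^3 - 2E^4 + E^6 + E^7) (1 + (1 - E)^2) = (16 - E^8) (1 - E).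
\<close>

lemma bbp_bracket_add_Suc_Suc:
  assumes "a \<ge> 0"
  shows "bbp_bracket m a + bbp_bracket (Suc (Suc m)) a
       = 16 * beta_poch (Suc m) (a + 1) - beta_poch (Suc m) (a + 9)"
  using assms unfolding bbp_bracket_def
  by (simp add: beta_poch_Suc_Suc beta_poch_Suc add.assoc algebra_simps)

lemma abs_bbp_bracket_le:
  assumes "a \<ge> 0"
  shows "\<bar>bbp_bracket m a\<bar> \<le> 10 / real (Suc m)"
proof -
  define c where "c = 1 / real (Suc m)"
  have "0 \<le> beta_poch m (a + j)" "beta_poch m (a + j) \<le> c" if "j \<ge> 1" for j
    using assms that unfolding c_def
    by (simp_all add: beta_poch_nonneg beta_poch_le del: of_nat_Suc)
  from this [of 1] this [of 3] this [of 4] this [of 5] this [of 7] this [of 8]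
  have "\<bar>bbp_bracket m a\<bar> \<le> 10 * c"
    unfolding bbp_bracket_def abs_le_iff by simp
  then show ?thesis
    unfolding c_def by simp
qed

definition bbp_series :: "nat \<Rightarrow> nat \<Rightarrow> real" where
  "bbp_series n k = (-1) ^ n / 16 * (1 / 16) ^ k * bbp_bracket (2 * n - 1) (8 * real k)"

lemma bbp_series_eq:
  assumes "n \<ge> 1"
  shows "(-1) ^ n * fact (2 * n - 1) / 16 * bbp_term n k = bbp_series n k"
proof -
  define m where "m = 2 * n - 1"
  have "2 * n = Suc m"
    using assms unfolding m_def by simp
  then have "fact m * bbp_term n k = (1 / 16) ^ k * bbp_bracket m (8 * real k)"
    unfolding bbp_term_def bbp_bracket_def beta_poch_def
    by (simp add: algebra_simps power_one_over)
  then show ?thesis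
    unfolding bbp_series_def m_def by (simp add: algebra_simps)
qed

lemma bbp_series_diff_telescopes:
  assumes "n \<ge> 1"
  defines "u \<equiv> \<lambda>k. (-1) ^ n * (1 / 16) ^ k * beta_poch (2 * n) (8 * real k + 1)"
  shows "bbp_series n k - bbp_series (Suc n) k = u k - u (Suc k)"
proof -
  define m where "m = 2 * n - 1"
  have m: "2 * n = Suc m" "2 * Suc n - 1 = Suc (Suc m)"
    using assms unfolding m_def by auto
  have "bbp_series n k - bbp_series (Suc n) k
      = (-1) ^ n / 16 * (1 / 16) ^ k
        * (bbp_bracket m (8 * real k) + bbp_bracket (Suc (Suc m)) (8 * real k))"
    unfolding bbp_series_def m m_def [symmetric] by (simp add: algebra_simps)
  also have "\<dots> = (-1) ^ n / 16 * (1 / 16) ^ k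
      * (16 * beta_poch (Suc m) (8 * real k + 1) - beta_poch (Suc m) (8 * real k + 9))"
    by (simp add: bbp_bracket_add_Suc_Suc)
  also have "\<dots> = u k - u (Suc k)"
    unfolding u_def m by (simp add: algebra_simps)
  finally show ?thesis .
qed

lemma abs_bbp_series_le:
  assumes "n \<ge> 1"
  shows "\<bar>bbp_series n k\<bar> \<le> (1 / 16) ^ k / real n"
proof -
  have "\<bar>bbp_series n k\<bar> = 1 / 16 * (1 / 16) ^ k * \<bar>bbp_bracket (2 * n - 1) (8 * real k)\<bar>"
    unfolding bbp_series_def by (simp add: abs_mult power_abs)
  also have "\<dots> \<le> 1 / 16 * (1 / 16) ^ k * (10 / real (Suc (2 * n - 1)))"
    by (intro mult_left_mono abs_bbp_bracket_le) auto
  also have "\<dots> \<le> (1 / 16) ^ k / real n"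
    using assms by (simp add: Suc_diff_le field_simps)
  finally show ?thesis .
qed

lemma summable_abs_bbp_series: "n \<ge> 1 \<Longrightarrow> summable (\<lambda>k. \<bar>bbp_series n k\<bar>)"
  by (rule summable_comparison_test [where g = "\<lambda>k. (1 / 16) ^ k / real n"])
    (auto intro!: abs_bbp_series_le summable_divide summable_geometric)

lemma summable_bbp_series: "n \<ge> 1 \<Longrightarrow> summable (bbp_series n)"
  by (rule summable_rabs_cancel) (rule summable_abs_bbp_series)

lemma abs_suminf_bbp_series_le:
  assumes "n \<ge> 1"
  shows "\<bar>suminf (bbp_series n)\<bar> \<le> 16 / 15 / real n"
proof -
  have geom: "(\<lambda>k. (1 / 16) ^ k / real n) sums (16 / 15 / real n)"
    using sums_divide [OF geometric_sums [of "1 / 16 :: real"], of "real n"] by simp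
  have "\<bar>suminf (bbp_series n)\<bar> \<le> (\<Sum>k. \<bar>bbp_series n k\<bar>)"
    using summable_norm [of "bbp_series n"] summable_abs_bbp_series [OF assms] by simp
  also have "\<dots> \<le> (\<Sum>k. (1 / 16) ^ k / real n)"
    using assms geom summable_abs_bbp_series [OF assms]
    by (intro suminf_le) (auto simp: abs_bbp_series_le sums_summable)
  also have "\<dots> = 16 / 15 / real n"
    using geom by (rule sums_unique [symmetric])
  finally show ?thesis .
qed

lemma suminf_bbp_series_tendsto_zero: "(\<lambda>n. suminf (bbp_series n)) \<longlonglongrightarrow> 0"
proof (rule tendsto_0_le [where K = 1])
  show "(\<lambda>n. 16 / 15 / real n) \<longlonglongrightarrow> 0"
    by (rule lim_const_over_n)
  show "\<forall>\<^sub>F n in sequentially. norm (suminf (bbp_series n)) \<le> norm (16 / 15 / real n) * 1"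
    using eventually_ge_at_top [of 1] by eventually_elim (use abs_suminf_bbp_series_le in force)
qed

lemma suminf_bbp_series_diff:
  assumes "n \<ge> 1"
  shows "suminf (bbp_series n) - suminf (bbp_series (Suc n)) = (-1) ^ n / (2 * real n + 1)"
proof -
  define u where "u k = (-1) ^ n * (1 / 16) ^ k * beta_poch (2 * n) (8 * real k + 1)" for k
  have "\<bar>u k\<bar> \<le> (1 / 16) ^ k" for k
  proof -
    have "beta_poch (2 * n) (8 * real k + 1) \<le> 1"
      using beta_poch_le [of "8 * real k + 1" "2 * n"] by (simp add: order_trans)
    moreover have "0 \<le> beta_poch (2 * n) (8 * real k + 1)"
      by (simp add: beta_poch_nonneg)
    ultimately show ?thesis
      unfolding u_def by (simp add: abs_mult power_abs mult_left_le)
  qed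
  then have "u \<longlonglongrightarrow> 0"
    by (intro tendsto_0_le [OF LIMSEQ_power_zero [of "1 / 16 :: real"], where K = 1]
        always_eventually) auto
  have "suminf (bbp_series n) - suminf (bbp_series (Suc n))
      = (\<Sum>k. bbp_series n k - bbp_series (Suc n) k)"
    using assms by (simp add: suminf_diff summable_bbp_series)
  also have "\<dots> = (\<Sum>k. u k - u (Suc k))"
    using bbp_series_diff_telescopes [OF assms] unfolding u_def by simp
  also have "\<dots> = u 0"
    using telescope_sums' [OF \<open>u \<longlonglongrightarrow> 0\<close>] by (simp add: sums_iff)
  also have "u 0 = (-1) ^ n / (2 * real n + 1)"
    unfolding u_def by (simp add: beta_poch_def pochhammer_fact [symmetric] del: of_nat_Suc)
  finally show ?thesis .
qed

lemma R_Suc: "R (Suc n) = R n - (-1) ^ n / (2 * real n + 1)"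
  unfolding R_def by simp

lemma R_tendsto_zero: "R \<longlonglongrightarrow> 0"
proof -
  have "(\<lambda>k. (-1) ^ k * (1 / real (k * 2 + 1) * 1 ^ (k * 2 + 1))) sums arctan (1 :: real)"
    using summable_arctan_series [of 1] arctan_series [of 1] by (simp add: summable_sums)
  then have "(\<lambda>n. \<Sum>m<n. (-1) ^ m / (2 * real m + 1)) \<longlonglongrightarrow> pi / 4"
    by (simp add: sums_def arctan_one algebra_simps)
  then have "(\<lambda>n. pi / 4 - (\<Sum>m<n. (-1) ^ m / (2 * real m + 1))) \<longlonglongrightarrow> pi / 4 - pi / 4"
    by (intro tendsto_diff tendsto_const)
  then show ?thesis
    unfolding R_def [abs_def] by simp
qed

lemma LIMSEQ_stationary_eq:
  fixes f :: "nat \<Rightarrow> 'a :: t2_space"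
  assumes step: "\<And>j. j \<ge> N \<Longrightarrow> f (Suc j) = f j" and lim: "f \<longlonglongrightarrow> L" and "n \<ge> N"
  shows "f n = L"
proof -
  have "f (j + n) = f n" for j
    using \<open>n \<ge> N\<close> by (induction j) (simp_all add: step)
  then have "(\<lambda>j. f n) \<longlonglongrightarrow> L"
    using LIMSEQ_ignore_initial_segment [OF lim, of n] by simp
  then show ?thesis
    by (simp add: LIMSEQ_const_iff)
qed

theorem theorem1:
  fixes n :: nat
  assumes "n \<ge> 1"
  shows "(\<lambda>k. (-1) ^ n * fact (2 * n - 1) / 16 * bbp_term n k) sums R n"
proof -
  define D where "D j = suminf (bbp_series j) - R j" for j
  have "D (Suc j) = D j" if "j \<ge> 1" for j
    using suminf_bbp_series_diff [OF that] unfolding D_def R_Suc by simp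
  moreover have "D \<longlonglongrightarrow> 0"
    using tendsto_diff [OF suminf_bbp_series_tendsto_zero R_tendsto_zero]
    unfolding D_def [abs_def] by simp
  ultimately have "suminf (bbp_series n) = R n"
    using LIMSEQ_stationary_eq [of 1 D 0 n] assms unfolding D_def by simp
  then have "bbp_series n sums R n"
    using summable_bbp_series [OF assms] by (simp add: sums_iff)
  then show ?thesis
    using bbp_series_eq [OF assms] by simp
qed

end
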